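(* Let $\mathcal{C}$ be a set of representatives of the isomorphism classes of finite connected racks. For $C\in\mathcal{C}$, let $\Phi_C\colon \mathrm{B}(\mathcal{R})\to\mathbb{Z}$ be the ring homomorphism determined by $\Phi_C(b(R))=|\mathrm{Mor}_{\mathcal{R}}(C,R)|$ for finite racks $R$, where $\mathrm{Mor}_{\mathcal{R}}(C,R)$ is the set of rack morphisms $C\to R$. Then the ring homomorphism $$\prod_{C\in\mathcal{C}}\Phi_C\colon \mathrm{B}(\mathcal{R})\longrightarrow\prod_{C\in\mathcal{C}}\mathbb{Z}$$ is injective.
   Context: A rack is a set $R$ with a binary operation $\rhd$ such that every left multiplication $\ell_a\colon b\mapsto a\rhd b$ is a bijection and $a\rhd(b\rhd c)=(a\rhd b)\rhd(a\rhd c)$ for all $a,b,c$. Morphisms of racks are maps preserving $\rhd$; the product $R\times S$ of racks is the cartesian product with componentwise operation. The inner automorphism group $\mathrm{Inn}(R)$ is the subgroup of the symmetric group on $R$ generated by all $\ell_a$. A rack is connected if it is non-empty and $\mathrm{Inn}(R)$ acts transitively on $R$. A subrack of $R$ is a subset $S$ with $\ell_s(S)=S$ for all $s\in S$. A decomposition of $R$ into $S$ and $T$ means that $S,T$ are disjoint subracks (possibly empty) with $S\cup T=R$. The Burnside ring of finite racks $\mathrm{B}(\mathcal{R})$ is the abelian group generated by symbols $b(R)$, one for each finite rack $R$, subject to the relations $b(R_1)=b(R_2)$ whenever $R_1\cong R_2$, and $b(R)=b(S)+b(T)$ whenever $R$ decomposes into subracks $S$ and $T$; it is a commutative ring with $b(R)b(R')=b(R\times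 R')$ and unit $b(\star)$, $\star$ the one-element rack. (That $\Phi_C$ is a well-defined ring homomorphism is part of the setting.) *)

theory Defs
  imports Main "HOL-Library.FuncSet"
begin

text \<open>A (finite) rack is represented by a carrier set of naturals together with an
operation. Every finite rack is isomorphic to one of this form.\<close>

type_synonym rack = "nat set \<times> (nat \<Rightarrow> nat \<Rightarrow> nat)"

definition is_rack :: "rack \<Rightarrow> bool" where
  "is_rack R \<longleftrightarrow> (let A = fst R; op = snd R in
     (\<forall>a\<in>A. \<forall>b\<in>A. op a b \<in> A) \<and>
     (\<forall>a\<in>A. bij_betw (op a) A A) \<and>
     (\<forall>a\<in>A. \<forall>b\<in>A. \<forall>c\<in>A. op a (op b c) = op (op a b) (op a c)))"

definition finite_rack :: "rack \<Rightarrow> bool" where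
  "finite_rack R \<longleftrightarrow> is_rack R \<and> finite (fst R)"

definition rack_hom :: "rack \<Rightarrow> rack \<Rightarrow> (nat \<Rightarrow> nat) \<Rightarrow> bool" where
  "rack_hom R S f \<longleftrightarrow> f \<in> fst R \<rightarrow> fst S \<and>
     (\<forall>a\<in>fst R. \<forall>b\<in>fst R. f (snd R a b) = snd S (f a) (f b))"

definition Mor :: "rack \<Rightarrow> rack \<Rightarrow> (nat \<Rightarrow> nat) set" where
  "Mor C R = {f. f \<in> fst C \<rightarrow>\<^sub>E fst R \<and> rack_hom C R f}"

definition rack_iso :: "rack \<Rightarrow> rack \<Rightarrow> bool" where
  "rack_iso R S \<longleftrightarrow> (\<exists>f. bij_betw f (fst R) (fst S) \<and> rack_hom R S f)"

inductive_set Inn :: "rack \<Rightarrow> (nat \<Rightarrow> nat) set" for R :: rack where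
  Inn_id: "id \<in> Inn R"
| Inn_left: "g \<in> Inn R \<Longrightarrow> a \<in> fst R \<Longrightarrow> snd R a \<circ> g \<in> Inn R"
| Inn_left_inv: "g \<in> Inn R \<Longrightarrow> a \<in> fst R \<Longrightarrow> inv_into (fst R) (snd R a) \<circ> g \<in> Inn R"

definition connected_rack :: "rack \<Rightarrow> bool" where
  "connected_rack R \<longleftrightarrow> fst R \<noteq> {} \<and> (\<forall>x\<in>fst R. \<forall>y\<in>fst R. \<exists>g\<in>Inn R. g x = y)"

definition subrack :: "rack \<Rightarrow> nat set \<Rightarrow> bool" where
  "subrack R S \<longleftrightarrow> S \<subseteq> fst R \<and> (\<forall>s\<in>S. snd R s ` S = S)"

definition decomposition :: "rack \<Rightarrow> nat set \<Rightarrow> nat set \<Rightarrow> bool" where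
  "decomposition R S T \<longleftrightarrow> subrack R S \<and> subrack R T \<and> S \<inter> T = {} \<and> S \<union> T = fst R"

text \<open>Free abelian group on symbols b(R), R a finite rack: finitely supported integer
functions supported on finite racks.\<close>
definition free_elem :: "(rack \<Rightarrow> int) \<Rightarrow> bool" where
  "free_elem x \<longleftrightarrow> finite {R. x R \<noteq> 0} \<and> (\<forall>R. x R \<noteq> 0 \<longrightarrow> finite_rack R)"

definition gen :: "rack \<Rightarrow> rack \<Rightarrow> int" where
  "gen R = (\<lambda>X. if X = R then 1 else 0)"

text \<open>The subgroup of relations defining B(R).\<close>
inductive_set burnside_rel :: "(rack \<Rightarrow> int) set" where
  rel_zero: "(\<lambda>_. 0) \<in> burnside_rel"
| rel_iso: "finite_rack R1 \<Longrightarrow> finite_rack R2 \<Longrightarrow> rack_iso R1 R2 \<Longrightarrow>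
     (\<lambda>X. gen R1 X - gen R2 X) \<in> burnside_rel"
| rel_dec: "finite_rack R \<Longrightarrow> decomposition R S T \<Longrightarrow>
     (\<lambda>X. gen R X - gen (S, snd R) X - gen (T, snd R) X) \<in> burnside_rel"
| rel_add: "x \<in> burnside_rel \<Longrightarrow> y \<in> burnside_rel \<Longrightarrow> (\<lambda>X. x X + y X) \<in> burnside_rel"
| rel_neg: "x \<in> burnside_rel \<Longrightarrow> (\<lambda>X. - x X) \<in> burnside_rel"

definition Phi :: "rack \<Rightarrow> (rack \<Rightarrow> int) \<Rightarrow> int" where
  "Phi C x = (\<Sum>R\<in>{R. x R \<noteq> 0}. x R * int (card (Mor C R)))"

definition rep_set :: "rack set \<Rightarrow> bool" where
  "rep_set \<C> \<longleftrightarrow> (\<forall>C\<in>\<C>. finite_rack C \<and> connected_rack C) \<and>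
     (\<forall>R. finite_rack R \<and> connected_rack R \<longrightarrow> (\<exists>!C. C \<in> \<C> \<and> rack_iso R C))"

end

theory Submission
  imports Defs
begin

text \<open>
  \<open>\<Phi>\<^sub>C\<close> kills the relations: the preimage, under a morphism out of \<open>C\<close>, of a piece of a
  decomposition is invariant under all left multiplications, hence empty or all of \<open>C\<close> when
  \<open>C\<close> is connected; and isomorphic racks receive equally many morphisms. Moreover,
  splitting a non-connected rack into an orbit of \<open>Inn\<close> and its complement shows, by
  induction on the size, that every element is congruent modulo the relations to an
  integer combination \<open>y\<close> of finitely many representatives.

  It remains to see that \<open>\<Phi>\<^sub>D y = 0\<close> for all representatives \<open>D\<close> forces \<open>y = 0\<close>.
  Grouping the morphisms \<open>D \<rightarrow> C\<close> by their image, a connected subrack of \<open>C\<close>, gives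
  \<open>|Mor(D,C)| = \<Sum>\<^sub>E |Mor_onto(D,E)| \<cdot> s(E,C)\<close>, where \<open>E\<close> runs over representatives and
  \<open>s(E,C)\<close> counts the connected subracks of \<open>C\<close> isomorphic to \<open>E\<close>. With respect to
  cardinality the first factor is lower and the second upper triangular, both with
  non-zero diagonal, so each is injective on finitely supported vectors.
\<close>

section \<open>Racks, orbits and left-invariant subsets\<close>

lemma rack_closed: "is_rack R \<Longrightarrow> a \<in> fst R \<Longrightarrow> b \<in> fst R \<Longrightarrow> snd R a b \<in> fst R"
  unfolding is_rack_def Let_def by blast

lemma rack_bij: "is_rack R \<Longrightarrow> a \<in> fst R \<Longrightarrow> bij_betw (snd R a) (fst R) (fst R)"
  unfolding is_rack_def Let_def by blast

lemma rack_self_distrib: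
  "is_rack R \<Longrightarrow> a \<in> fst R \<Longrightarrow> b \<in> fst R \<Longrightarrow> c \<in> fst R \<Longrightarrow>
    snd R a (snd R b c) = snd R (snd R a b) (snd R a c)"
  unfolding is_rack_def Let_def by blast

lemma rack_inj: "is_rack R \<Longrightarrow> a \<in> fst R \<Longrightarrow> inj_on (snd R a) (fst R)"
  using rack_bij bij_betw_imp_inj_on by blast

lemma rack_inv_closed:
  "is_rack R \<Longrightarrow> a \<in> fst R \<Longrightarrow> z \<in> fst R \<Longrightarrow> inv_into (fst R) (snd R a) z \<in> fst R"
  using rack_bij by (metis bij_betw_imp_surj_on inv_into_into)

lemma rack_left_inv:
  "is_rack R \<Longrightarrow> a \<in> fst R \<Longrightarrow> z \<in> fst R \<Longrightarrow> snd R a (inv_into (fst R) (snd R a) z) = z"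
  using rack_bij by (metis bij_betw_imp_surj_on f_inv_into_f)

lemma is_rackI:
  assumes "\<And>a b. a \<in> A \<Longrightarrow> b \<in> A \<Longrightarrow> op a b \<in> A"
    and "\<And>a. a \<in> A \<Longrightarrow> bij_betw (op a) A A"
    and "\<And>a b c. a \<in> A \<Longrightarrow> b \<in> A \<Longrightarrow> c \<in> A \<Longrightarrow> op a (op b c) = op (op a b) (op a c)"
  shows "is_rack (A, op)"
  unfolding is_rack_def Let_def fst_conv snd_conv using assms by blast

lemma subrack_is_rack:
  assumes R: "is_rack R" and S: "subrack R S"
  shows "is_rack (S, snd R)"
proof (rule is_rackI)
  have sub: "S \<subseteq> fst R" and im: "\<And>s. s \<in> S \<Longrightarrow> snd R s ` S = S"
    using S unfolding subrack_def by auto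
  show "bij_betw (snd R a) S S" if a: "a \<in> S" for a
  proof -
    have "a \<in> fst R" using a sub by blast
    then have "inj_on (snd R a) S" using inj_on_subset[OF rack_inj[OF R] sub] by blast
    then show ?thesis using im[OF a] unfolding bij_betw_def by simp
  qed
  show "snd R a b \<in> S" if "a \<in> S" "b \<in> S" for a b
    using im that by blast
  show "snd R a (snd R b c) = snd R (snd R a b) (snd R a c)" if "a \<in> S" "b \<in> S" "c \<in> S" for a b c
    using rack_self_distrib[OF R] sub that by blast
qed

lemma Inn_closed: "g \<in> Inn R \<Longrightarrow> is_rack R \<Longrightarrow> z \<in> fst R \<Longrightarrow> g z \<in> fst R"
  by (induction g arbitrary: z rule: Inn.induct) (auto simp: rack_closed rack_inv_closed)

definition orbit :: "rack \<Rightarrow> nat \<Rightarrow> nat set" where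
  "orbit R x = (\<lambda>g. g x) ` Inn R"

lemma orbit_subset: "is_rack R \<Longrightarrow> x \<in> fst R \<Longrightarrow> orbit R x \<subseteq> fst R"
  unfolding orbit_def using Inn_closed by blast

lemma self_in_orbit: "x \<in> orbit R x"
  unfolding orbit_def by (rule image_eqI[of _ _ id]) (simp_all add: Inn.Inn_id)

definition left_invariant :: "rack \<Rightarrow> nat set \<Rightarrow> bool" where
  "left_invariant R A \<longleftrightarrow> (\<forall>a\<in>fst R. \<forall>z\<in>fst R. snd R a z \<in> A \<longleftrightarrow> z \<in> A)"

lemma left_invariant_Inn:
  assumes R: "is_rack R" and A: "left_invariant R A" and g: "g \<in> Inn R" and z: "z \<in> fst R"
  shows "g z \<in> A \<longleftrightarrow> z \<in> A"
  using g z
proof (induction g arbitrary: z rule: Inn.induct)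
  case Inn_id
  then show ?case by simp
next
  case (Inn_left g a)
  then show ?case using A Inn_closed[OF Inn_left.hyps(1) R] unfolding left_invariant_def by simp
next
  case (Inn_left_inv g a)
  have gz: "g z \<in> fst R" using Inn_closed[OF Inn_left_inv.hyps(1) R Inn_left_inv.prems] .
  let ?w = "inv_into (fst R) (snd R a) (g z)"
  have "?w \<in> A \<longleftrightarrow> snd R a ?w \<in> A"
    using A Inn_left_inv.hyps(2) rack_inv_closed[OF R Inn_left_inv.hyps(2) gz]
    unfolding left_invariant_def by auto
  then show ?case using Inn_left_inv rack_left_inv[OF R Inn_left_inv.hyps(2) gz] by simp
qed

lemma connected_left_invariant:
  assumes "is_rack R" "connected_rack R" "left_invariant R A" "x \<in> fst R" "x \<in> A"
  shows "fst R \<subseteq> A"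
proof
  fix y assume "y \<in> fst R"
  then obtain g where "g \<in> Inn R" "g x = y"
    using assms(2,4) unfolding connected_rack_def by blast
  then show "y \<in> A" using left_invariant_Inn[OF assms(1,3)] assms(4,5) by blast
qed

lemma left_invariant_vimage:
  assumes "rack_hom C R f" "left_invariant R A"
  shows "left_invariant C {c. f c \<in> A}"
  using assms unfolding rack_hom_def left_invariant_def by auto

lemma orbit_left_invariant:
  assumes R: "is_rack R"
  shows "left_invariant R (orbit R x)"
  unfolding left_invariant_def
proof (intro ballI iffI)
  fix a z assume a: "a \<in> fst R" and z: "z \<in> fst R"
  show "snd R a z \<in> orbit R x" if z_orbit: "z \<in> orbit R x"
  proof -
    obtain g where "g \<in> Inn R" "z = g x" using z_orbit unfolding orbit_def by blast
    then show ?thesis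
      unfolding orbit_def by (intro image_eqI[of _ _ "snd R a \<circ> g"] Inn.Inn_left a) simp_all
  qed
  assume "snd R a z \<in> orbit R x"
  then obtain g where g: "g \<in> Inn R" "snd R a z = g x" unfolding orbit_def by blast
  have "z = (inv_into (fst R) (snd R a) \<circ> g) x"
    using inv_into_f_f[OF rack_inj[OF R a] z] g(2) by simp
  then show "z \<in> orbit R x"
    using Inn.Inn_left_inv[OF g(1) a] unfolding orbit_def by blast
qed

lemma decomposition_image_eq:
  assumes R: "is_rack R" and dec: "decomposition R S T" and a: "a \<in> fst R"
  shows "snd R a ` S = S"
proof -
  have S: "subrack R S" and T: "subrack R T" and ST: "S \<inter> T = {}" "S \<union> T = fst R"
    using dec unfolding decomposition_def by auto
  show ?thesis
  proof (cases "a \<in> S")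
    case True
    then show ?thesis using S unfolding subrack_def by blast
  next
    case False
    then have "snd R a ` T = T" using T ST a unfolding subrack_def by blast
    moreover have "S = fst R - T" using ST by blast
    moreover have "T \<subseteq> fst R" using T unfolding subrack_def by blast
    ultimately show ?thesis
      using rack_bij[OF R a] inj_on_image_set_diff[OF rack_inj[OF R a], of "fst R" T]
      by (simp add: bij_betw_def)
  qed
qed

lemma decomposition_left_invariant:
  assumes R: "is_rack R" and dec: "decomposition R S T"
  shows "left_invariant R S"
  unfolding left_invariant_def
proof (intro ballI)
  fix a z assume a: "a \<in> fst R" and z: "z \<in> fst R"
  have "S \<subseteq> fst R" using dec unfolding decomposition_def subrack_def by blast
  then have "snd R a z \<in> snd R a ` S \<longleftrightarrow> z \<in> S"
    using inj_on_image_mem_iff[OF rack_inj[OF R a] z] by blast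
  then show "snd R a z \<in> S \<longleftrightarrow> z \<in> S" using decomposition_image_eq[OF R dec a] by simp
qed

lemma left_invariant_image_eq:
  assumes R: "is_rack R" and B: "left_invariant R B" "B \<subseteq> fst R" and a: "a \<in> fst R"
  shows "snd R a ` B = B"
proof
  show "snd R a ` B \<subseteq> B" using B a unfolding left_invariant_def by blast
  show "B \<subseteq> snd R a ` B"
  proof
    fix z assume z: "z \<in> B"
    let ?w = "inv_into (fst R) (snd R a) z"
    have w: "?w \<in> fst R" "snd R a ?w = z"
      using z B(2) rack_inv_closed[OF R a] rack_left_inv[OF R a] by auto
    moreover have "snd R a ?w \<in> B \<longleftrightarrow> ?w \<in> B"
      using B(1) a w(1) unfolding left_invariant_def by blast
    ultimately show "z \<in> snd R a ` B" using z by (metis imageI)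
  qed
qed

lemma left_invariant_Diff:
  "is_rack R \<Longrightarrow> left_invariant R A \<Longrightarrow> left_invariant R (fst R - A)"
  unfolding left_invariant_def using rack_closed by blast

lemma left_invariant_decomposition:
  assumes R: "is_rack R" and A: "left_invariant R A" "A \<subseteq> fst R"
  shows "decomposition R A (fst R - A)"
proof -
  have "snd R a ` A = A" "snd R a ` (fst R - A) = fst R - A" if "a \<in> fst R" for a
    using left_invariant_image_eq[OF R _ _ that] left_invariant_Diff[OF R A(1)] A by auto
  moreover have "A \<subseteq> fst R" "fst R - A \<subseteq> fst R" using A(2) by auto
  ultimately show ?thesis unfolding decomposition_def subrack_def by blast
qed

section \<open>Morphism counts and isomorphisms\<close>

lemma Mor_finite: "finite (fst D) \<Longrightarrow> finite (fst X) \<Longrightarrow> finite (Mor D X)"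
  unfolding Mor_def by (rule rev_finite_subset[of "fst D \<rightarrow>\<^sub>E fst X"]) (auto intro: finite_PiE)

lemma Mor_subrack: "S \<subseteq> fst R \<Longrightarrow> Mor C (S, snd R) = {f \<in> Mor C R. f ` fst C \<subseteq> S}"
  unfolding Mor_def rack_hom_def by auto

lemma rack_iso_refl: "rack_iso R R"
  unfolding rack_iso_def rack_hom_def by (rule exI[of _ id]) auto

lemma rack_iso_sym:
  assumes R: "is_rack R" and iso: "rack_iso R S"
  shows "rack_iso S R"
proof -
  obtain h where h: "bij_betw h (fst R) (fst S)" "rack_hom R S h"
    using iso unfolding rack_iso_def by blast
  let ?g = "inv_into (fst R) h"
  have g: "bij_betw ?g (fst S) (fst R)" using bij_betw_inv_into[OF h(1)] .
  have "?g (snd S x y) = snd R (?g x) (?g y)" if "x \<in> fst S" "y \<in> fst S" for x y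
  proof -
    have gxy: "?g x \<in> fst R" "?g y \<in> fst R" using g that bij_betwE by blast+
    have "h (snd R (?g x) (?g y)) = snd S (h (?g x)) (h (?g y))"
      using h(2) gxy unfolding rack_hom_def by blast
    also have "\<dots> = snd S x y" using h(1) that by (simp add: bij_betw_inv_into_right)
    finally show ?thesis
      using h(1) rack_closed[OF R gxy] by (metis bij_betw_inv_into_left)
  qed
  then have "rack_hom S R ?g" using g unfolding rack_hom_def bij_betw_def by blast
  then show ?thesis using g unfolding rack_iso_def by blast
qed

definition Mor_onto :: "rack \<Rightarrow> rack \<Rightarrow> (nat \<Rightarrow> nat) set" where
  "Mor_onto D X = {f \<in> Mor D X. f ` fst D = fst X}"

lemma Mor_onto_subset: "Mor_onto D X \<subseteq> Mor D X"
  unfolding Mor_onto_def by blast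

lemma Mor_comp_bij_inj:
  assumes h: "bij_betw h (fst X) (fst Y)"
  shows "inj_on (\<lambda>f. restrict (h \<circ> f) (fst D)) (Mor D X)"
proof (rule inj_onI)
  fix f g assume f: "f \<in> Mor D X" and g: "g \<in> Mor D X"
    and eq: "restrict (h \<circ> f) (fst D) = restrict (h \<circ> g) (fst D)"
  have pointwise: "f a = g a" if a: "a \<in> fst D" for a
  proof -
    have "h (f a) = h (g a)" using fun_cong[OF eq, of a] a by simp
    moreover have "f a \<in> fst X" "g a \<in> fst X" using f g a unfolding Mor_def by auto
    ultimately show ?thesis using h unfolding bij_betw_def inj_on_def by blast
  qed
  have "f \<in> extensional (fst D)" "g \<in> extensional (fst D)"
    using f g unfolding Mor_def by (auto simp: PiE_def)
  then show "f = g" using pointwise by (rule extensionalityI)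
qed

lemma Mor_comp_iso:
  assumes D: "is_rack D" and h: "bij_betw h (fst X) (fst Y)" "rack_hom X Y h"
  shows "(\<lambda>f. restrict (h \<circ> f) (fst D)) ` Mor D X \<subseteq> Mor D Y"
    and "(\<lambda>f. restrict (h \<circ> f) (fst D)) ` Mor_onto D X \<subseteq> Mor_onto D Y"
proof -
  have comp: "restrict (h \<circ> f) (fst D) \<in> Mor D Y" if f: "f \<in> Mor D X" for f
  proof -
    have "restrict (h \<circ> f) (fst D) (snd D a b) =
        snd Y (restrict (h \<circ> f) (fst D) a) (restrict (h \<circ> f) (fst D) b)"
      if "a \<in> fst D" "b \<in> fst D" for a b
      using f h(2) that rack_closed[OF D that] unfolding Mor_def rack_hom_def by (auto simp: Pi_iff)
    moreover have "restrict (h \<circ> f) (fst D) \<in> fst D \<rightarrow>\<^sub>E fst Y"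
      using f h(2) unfolding Mor_def rack_hom_def by auto
    ultimately show ?thesis unfolding Mor_def rack_hom_def by auto
  qed
  then show "(\<lambda>f. restrict (h \<circ> f) (fst D)) ` Mor D X \<subseteq> Mor D Y" by blast
  show "(\<lambda>f. restrict (h \<circ> f) (fst D)) ` Mor_onto D X \<subseteq> Mor_onto D Y"
  proof
    fix g assume "g \<in> (\<lambda>f. restrict (h \<circ> f) (fst D)) ` Mor_onto D X"
    then obtain f where f: "f \<in> Mor_onto D X" "g = restrict (h \<circ> f) (fst D)" by blast
    have "g ` fst D = h ` f ` fst D" using f(2) by auto
    also have "\<dots> = fst Y" using f(1) h(1) unfolding Mor_onto_def bij_betw_def by simp
    finally show "g \<in> Mor_onto D Y" using comp f unfolding Mor_onto_def by simp
  qed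
qed

lemma card_Mor_le_iso:
  assumes "is_rack D" "finite (fst D)" "finite (fst Y)" "rack_iso X Y"
  shows "card (Mor D X) \<le> card (Mor D Y)" "card (Mor_onto D X) \<le> card (Mor_onto D Y)"
proof -
  obtain h where h: "bij_betw h (fst X) (fst Y)" "rack_hom X Y h"
    using assms(4) unfolding rack_iso_def by blast
  have fin: "finite (Mor D Y)" "finite (Mor_onto D Y)"
    using Mor_finite[OF assms(2,3)] finite_subset[OF Mor_onto_subset] by auto
  have "inj_on (\<lambda>f. restrict (h \<circ> f) (fst D)) (Mor_onto D X)"
    using inj_on_subset[OF Mor_comp_bij_inj[OF h(1)] Mor_onto_subset] .
  then show "card (Mor_onto D X) \<le> card (Mor_onto D Y)"
    using card_inj_on_le[OF _ Mor_comp_iso(2)[OF assms(1) h] fin(2)] by blast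
  show "card (Mor D X) \<le> card (Mor D Y)"
    using card_inj_on_le[OF Mor_comp_bij_inj[OF h(1)] Mor_comp_iso(1)[OF assms(1) h] fin(1)] .
qed

lemma card_Mor_iso:
  assumes "finite_rack D" "finite_rack X" "finite_rack Y" "rack_iso X Y"
  shows "card (Mor D X) = card (Mor D Y)" "card (Mor_onto D X) = card (Mor_onto D Y)"
proof -
  have "rack_iso Y X" using rack_iso_sym assms(2,4) unfolding finite_rack_def by blast
  then show "card (Mor D X) = card (Mor D Y)" "card (Mor_onto D X) = card (Mor_onto D Y)"
    using card_Mor_le_iso[of D Y X] card_Mor_le_iso[of D X Y] assms
    unfolding finite_rack_def by (meson le_antisym)+
qed

lemma hom_connected_into_decomposition:
  assumes R: "is_rack R" and C: "is_rack C" "connected_rack C"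
    and dec: "decomposition R S T" and f: "rack_hom C R f"
  shows "f ` fst C \<subseteq> S \<or> f ` fst C \<subseteq> T"
proof (cases "\<exists>c\<in>fst C. f c \<in> S")
  case True
  then obtain c where "c \<in> fst C" "f c \<in> S" by blast
  then have "fst C \<subseteq> {c. f c \<in> S}"
    using connected_left_invariant[OF C] left_invariant_vimage[OF f]
      decomposition_left_invariant[OF R dec] by blast
  then show ?thesis by blast
next
  case False
  then show ?thesis using f dec unfolding rack_hom_def decomposition_def by blast
qed

lemma card_Mor_decomposition:
  assumes R: "finite_rack R" and C: "finite_rack C" "connected_rack C"
    and dec: "decomposition R S T"
  shows "card (Mor C R) = card (Mor C (S, snd R)) + card (Mor C (T, snd R))"
proof -
  have ST: "S \<subseteq> fst R" "T \<subseteq> fst R" "S \<inter> T = {}"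
    using dec unfolding decomposition_def subrack_def by auto
  have "fst C \<noteq> {}" using C(2) unfolding connected_rack_def by blast
  then have disj: "Mor C (S, snd R) \<inter> Mor C (T, snd R) = {}"
    unfolding Mor_subrack[OF ST(1)] Mor_subrack[OF ST(2)] using ST(3) by blast
  have "f ` fst C \<subseteq> S \<or> f ` fst C \<subseteq> T" if "f \<in> Mor C R" for f
    using hom_connected_into_decomposition[OF _ _ C(2) dec] R C that
    unfolding finite_rack_def Mor_def by blast
  then have "Mor C R = Mor C (S, snd R) \<union> Mor C (T, snd R)"
    unfolding Mor_subrack[OF ST(1)] Mor_subrack[OF ST(2)] by blast
  moreover have "finite (Mor C (S, snd R))" "finite (Mor C (T, snd R))"
    using Mor_finite R C ST unfolding finite_rack_def by (simp_all add: finite_subset)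
  ultimately show ?thesis using disj by (simp add: card_Un_disjoint)
qed

section \<open>The homomorphisms Phi vanish on the relations\<close>

abbreviation support :: "(rack \<Rightarrow> int) \<Rightarrow> rack set" where
  "support x \<equiv> {R. x R \<noteq> 0}"

lemma support_gen: "support (gen R) = {R}"
  unfolding gen_def by auto

lemma finite_support_diff:
  "finite (support x) \<Longrightarrow> finite (support y) \<Longrightarrow> finite (support (\<lambda>X. x X - y X))"
  by (rule finite_subset[of _ "support x \<union> support y"]) auto

lemma Phi_eq_sum:
  "finite F \<Longrightarrow> support x \<subseteq> F \<Longrightarrow> Phi C x = (\<Sum>R\<in>F. x R * int (card (Mor C R)))"
  unfolding Phi_def by (rule sum.mono_neutral_left) auto

lemma Phi_gen: "Phi C (gen R) = int (card (Mor C R))"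
  unfolding Phi_def support_gen by (simp add: gen_def)

lemma Phi_add:
  assumes "finite (support x)" "finite (support y)"
  shows "Phi C (\<lambda>X. x X + y X) = Phi C x + Phi C y"
proof -
  let ?F = "support x \<union> support y"
  have F: "finite ?F" using assms by blast
  have "Phi C (\<lambda>X. x X + y X) = (\<Sum>R\<in>?F. (x R + y R) * int (card (Mor C R)))"
    by (rule Phi_eq_sum[OF F]) auto
  also have "\<dots> = Phi C x + Phi C y"
    by (simp add: Phi_eq_sum[OF F] distrib_right sum.distrib)
  finally show ?thesis .
qed

lemma Phi_uminus: "Phi C (\<lambda>X. - x X) = - Phi C x"
  unfolding Phi_def by (simp add: sum_negf)

lemma Phi_diff:
  assumes "finite (support x)" "finite (support y)"
  shows "Phi C (\<lambda>X. x X - y X) = Phi C x - Phi C y"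
  using Phi_add[of x "\<lambda>X. - y X"] Phi_uminus[of C y] assms by simp

lemma burnside_rel_finite_support: "r \<in> burnside_rel \<Longrightarrow> finite (support r)"
proof (induction r rule: burnside_rel.induct)
  case (rel_iso R1 R2)
  have "support (\<lambda>X. gen R1 X - gen R2 X) \<subseteq> {R1, R2}" by (auto simp: gen_def)
  then show ?case by (rule finite_subset) simp
next
  case (rel_dec R S T)
  have "support (\<lambda>X. gen R X - gen (S, snd R) X - gen (T, snd R) X) \<subseteq> {R, (S, snd R), (T, snd R)}"
    by (auto simp: gen_def)
  then show ?case by (rule finite_subset) simp
next
  case (rel_add x y)
  have "support (\<lambda>X. x X + y X) \<subseteq> support x \<union> support y" by auto
  then show ?case using rel_add.IH by (simp add: finite_subset)
qed simp_all

lemma Phi_burnside_rel: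
  assumes C: "finite_rack C" "connected_rack C" and r: "r \<in> burnside_rel"
  shows "Phi C r = 0"
  using r
proof (induction r rule: burnside_rel.induct)
  case rel_zero
  then show ?case unfolding Phi_def by simp
next
  case (rel_iso R1 R2)
  then show ?case using card_Mor_iso(1)[OF C(1) rel_iso] by (simp add: Phi_diff support_gen Phi_gen)
next
  case (rel_dec R S T)
  have fin: "finite (support (gen X))" for X by (simp add: support_gen)
  have "Phi C (\<lambda>X. gen R X - gen (S, snd R) X - gen (T, snd R) X)
      = Phi C (gen R) - Phi C (gen (S, snd R)) - Phi C (gen (T, snd R))"
    using Phi_diff[OF finite_support_diff[OF fin fin] fin] Phi_diff[OF fin fin] by simp
  then show ?case using card_Mor_decomposition[OF rel_dec(1) C rel_dec(2)] by (simp add: Phi_gen)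
next
  case (rel_add x y)
  then show ?case by (simp add: Phi_add burnside_rel_finite_support)
next
  case (rel_neg x)
  then show ?case by (simp add: Phi_uminus)
qed

section \<open>Reduction to combinations of representatives\<close>

definition rep :: "rack set \<Rightarrow> rack \<Rightarrow> rack" where
  "rep \<C> R = (THE C. C \<in> \<C> \<and> rack_iso R C)"

lemma rep_in_iso:
  assumes "rep_set \<C>" "finite_rack R" "connected_rack R"
  shows "rep \<C> R \<in> \<C>" "rack_iso R (rep \<C> R)"
  using theI'[of "\<lambda>C. C \<in> \<C> \<and> rack_iso R C"] assms unfolding rep_set_def rep_def by auto

lemma rep_eq_iff:
  assumes "rep_set \<C>" "finite_rack R" "connected_rack R" "C \<in> \<C>"
  shows "rep \<C> R = C \<longleftrightarrow> rack_iso R C"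
proof
  show "rack_iso R C" if "rep \<C> R = C" using rep_in_iso(2)[OF assms(1-3)] that by simp
  assume iso: "rack_iso R C"
  have "\<exists>!C. C \<in> \<C> \<and> rack_iso R C" using assms(1-3) unfolding rep_set_def by blast
  then show "rep \<C> R = C" using rep_in_iso[OF assms(1-3)] assms(4) iso by blast
qed

lemma rep_self: "rep_set \<C> \<Longrightarrow> C \<in> \<C> \<Longrightarrow> rep \<C> C = C"
  using rep_eq_iff rack_iso_refl unfolding rep_set_def by blast

lemma rep_set_iso_eq:
  assumes "rep_set \<C>" "A \<in> \<C>" "B \<in> \<C>" "rack_iso A B"
  shows "A = B"
proof -
  have "finite_rack A" "connected_rack A" using assms(1,2) unfolding rep_set_def by auto
  then show ?thesis using rep_eq_iff[OF assms(1)] assms(2-4) rack_iso_refl by metis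
qed

lemma burnside_rel_sum:
  "finite F \<Longrightarrow> (\<And>i. i \<in> F \<Longrightarrow> r i \<in> burnside_rel) \<Longrightarrow> (\<lambda>X. \<Sum>i\<in>F. r i X) \<in> burnside_rel"
proof (induction F rule: finite_induct)
  case empty
  then show ?case using burnside_rel.rel_zero by simp
next
  case (insert i F)
  then show ?case using burnside_rel.rel_add[of "r i" "\<lambda>X. \<Sum>i\<in>F. r i X"] by simp
qed

lemma burnside_rel_smult:
  assumes r: "r \<in> burnside_rel"
  shows "(\<lambda>X. k * r X) \<in> burnside_rel"
proof -
  have nat: "(\<lambda>X. int n * r X) \<in> burnside_rel" for n
    using burnside_rel_sum[of "{..<n}" "\<lambda>_. r"] r by simp
  show ?thesis
  proof (cases "k \<ge> 0")
    case True
    then show ?thesis using nat[of "nat k"] by simp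
  next
    case False
    then show ?thesis using burnside_rel.rel_neg[OF nat[of "nat (- k)"]] by simp
  qed
qed

lemma finite_rack_subrack:
  assumes "finite_rack R" "subrack R S"
  shows "finite_rack (S, snd R)"
proof -
  have "is_rack (S, snd R)" using subrack_is_rack assms unfolding finite_rack_def by blast
  moreover have "finite S" using assms finite_subset unfolding finite_rack_def subrack_def by blast
  ultimately show ?thesis unfolding finite_rack_def by simp
qed

lemma support_sum_subset: "support (\<lambda>X. \<Sum>i\<in>F. f i X) \<subseteq> (\<Union>i\<in>F. support (f i))"
proof
  fix X assume "X \<in> support (\<lambda>X. \<Sum>i\<in>F. f i X)"
  then have "(\<Sum>i\<in>F. f i X) \<noteq> 0" by simp
  then obtain i where "i \<in> F" "f i X \<noteq> 0" by (rule sum.not_neutral_contains_not_neutral)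
  then show "X \<in> (\<Union>i\<in>F. support (f i))" by blast
qed

lemma sum_support_gen: "finite (support x) \<Longrightarrow> (\<Sum>R\<in>support x. x R * gen R X) = x X"
proof -
  assume "finite (support x)"
  moreover have "(\<Sum>R\<in>support x. x R * gen R X) = (\<Sum>R\<in>support x. if R = X then x R else 0)"
    by (rule sum.cong) (auto simp: gen_def)
  ultimately show ?thesis by simp
qed

lemma gen_decomposition_congruent:
  assumes "finite_rack R" "decomposition R S T"
    and "(\<lambda>X. gen (S, snd R) X - yS X) \<in> burnside_rel" "(\<lambda>X. gen (T, snd R) X - yT X) \<in> burnside_rel"
  shows "(\<lambda>X. gen R X - (yS X + yT X)) \<in> burnside_rel"
proof -
  have "(\<lambda>X. (gen R X - gen (S, snd R) X - gen (T, snd R) X)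
      + (gen (S, snd R) X - yS X) + (gen (T, snd R) X - yT X)) \<in> burnside_rel"
    using burnside_rel.rel_add[OF burnside_rel.rel_add[OF burnside_rel.rel_dec[OF assms(1,2)] assms(3)] assms(4)]
    by simp
  then show ?thesis by (simp add: algebra_simps)
qed

lemma gen_empty_rack_in_burnside_rel:
  assumes "finite_rack R" "fst R = {}"
  shows "gen R \<in> burnside_rel"
proof -
  \<comment> \<open>the empty rack decomposes into two copies of itself, so \<open>b(\<emptyset>) = 2 b(\<emptyset>)\<close>\<close>
  have "({}, snd R) = R" using assms(2) by (metis prod.collapse)
  moreover have "decomposition R {} {}" using assms(2) unfolding decomposition_def subrack_def by simp
  ultimately have "(\<lambda>X. - (- gen R X)) \<in> burnside_rel"
    using burnside_rel.rel_neg[OF burnside_rel.rel_dec[OF assms(1)]] by fastforce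
  then show ?thesis by simp
qed

lemma orbit_decomposition:
  assumes R: "is_rack R" "finite (fst R)" and "x0 \<in> fst R" "y0 \<in> fst R" "y0 \<notin> orbit R x0"
  shows "decomposition R (orbit R x0) (fst R - orbit R x0)"
    and "card (orbit R x0) < card (fst R)" "card (fst R - orbit R x0) < card (fst R)"
proof -
  have O: "orbit R x0 \<subseteq> fst R" using orbit_subset[OF R(1) assms(3)] .
  then show "decomposition R (orbit R x0) (fst R - orbit R x0)"
    using left_invariant_decomposition[OF R(1) orbit_left_invariant[OF R(1)]] by blast
  show "card (orbit R x0) < card (fst R)" "card (fst R - orbit R x0) < card (fst R)"
    using assms self_in_orbit[of x0 R] O by (auto intro!: psubset_card_mono)
qed

lemma gen_congruent_reps_combination:
  assumes rep: "rep_set \<C>" and R: "finite_rack R"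
  shows "\<exists>y. finite (support y) \<and> support y \<subseteq> \<C> \<and> (\<lambda>X. gen R X - y X) \<in> burnside_rel"
  using R
proof (induction "card (fst R)" arbitrary: R rule: less_induct)
  case less
  have R: "is_rack R" "finite (fst R)" using less.prems unfolding finite_rack_def by auto
  consider "fst R = {}" | "connected_rack R"
    | x0 y0 where "x0 \<in> fst R" "y0 \<in> fst R" "y0 \<notin> orbit R x0"
    unfolding connected_rack_def orbit_def by blast
  then show ?case
  proof cases
    case 1
    then show ?thesis
      using gen_empty_rack_in_burnside_rel[OF less.prems] by (intro exI[of _ "\<lambda>_. 0"]) simp
  next
    case 2
    let ?C = "rep \<C> R"
    have "?C \<in> \<C>" "rack_iso R ?C" using rep_in_iso[OF rep less.prems 2] by auto
    moreover have "finite_rack ?C" using rep \<open>?C \<in> \<C>\<close> unfolding rep_set_def by blast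
    ultimately show ?thesis
      using burnside_rel.rel_iso[OF less.prems] by (intro exI[of _ "gen ?C"]) (simp add: support_gen)
  next
    case 3
    let ?O = "orbit R x0" and ?T = "fst R - orbit R x0"
    note dec = orbit_decomposition[OF R 3]
    have "finite_rack (?O, snd R)" "finite_rack (?T, snd R)"
      using dec(1) finite_rack_subrack[OF less.prems] unfolding decomposition_def by auto
    then obtain yO yT
      where yO: "finite (support yO)" "support yO \<subseteq> \<C>" "(\<lambda>X. gen (?O, snd R) X - yO X) \<in> burnside_rel"
        and yT: "finite (support yT)" "support yT \<subseteq> \<C>" "(\<lambda>X. gen (?T, snd R) X - yT X) \<in> burnside_rel"
      using less.hyps[of "(?O, snd R)"] less.hyps[of "(?T, snd R)"] dec(2,3) by auto
    moreover have "support (\<lambda>X. yO X + yT X) \<subseteq> support yO \<union> support yT" by auto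
    ultimately show ?thesis using gen_decomposition_congruent[OF less.prems dec(1) yO(3) yT(3)]
      by (intro exI[of _ "\<lambda>X. yO X + yT X"]) (auto intro: finite_subset)
  qed
qed

lemma congruent_reps_combination:
  assumes rep: "rep_set \<C>" and x: "free_elem x"
  shows "\<exists>y. finite (support y) \<and> support y \<subseteq> \<C> \<and> (\<lambda>X. x X - y X) \<in> burnside_rel"
proof -
  let ?F = "support x"
  have F: "finite ?F" "\<And>R. R \<in> ?F \<Longrightarrow> finite_rack R" using x unfolding free_elem_def by auto
  have "\<forall>R\<in>?F. \<exists>y. finite (support y) \<and> support y \<subseteq> \<C> \<and> (\<lambda>X. gen R X - y X) \<in> burnside_rel"
    using gen_congruent_reps_combination[OF rep F(2)] by blast
  then have "\<exists>Y. \<forall>R\<in>?F.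
      finite (support (Y R)) \<and> support (Y R) \<subseteq> \<C> \<and> (\<lambda>X. gen R X - Y R X) \<in> burnside_rel"
    by (rule bchoice)
  then obtain Y where Y: "\<And>R. R \<in> ?F \<Longrightarrow>
      finite (support (Y R)) \<and> support (Y R) \<subseteq> \<C> \<and> (\<lambda>X. gen R X - Y R X) \<in> burnside_rel"
    by blast
  define y where "y X = (\<Sum>R\<in>?F. x R * Y R X)" for X
  have "(\<lambda>X. x X - y X) = (\<lambda>X. \<Sum>R\<in>?F. x R * (gen R X - Y R X))"
    unfolding y_def by (simp add: right_diff_distrib sum_subtractf sum_support_gen[OF F(1)])
  also have "\<dots> \<in> burnside_rel"
  proof (rule burnside_rel_sum[OF F(1)])
    fix R assume "R \<in> ?F"
    then have "(\<lambda>X. gen R X - Y R X) \<in> burnside_rel" using Y by blast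
    then show "(\<lambda>X. x R * (gen R X - Y R X)) \<in> burnside_rel" by (rule burnside_rel_smult)
  qed
  finally have rel: "(\<lambda>X. x X - y X) \<in> burnside_rel" .
  have "support y \<subseteq> (\<Union>R\<in>?F. support (\<lambda>X. x R * Y R X))"
    unfolding y_def by (rule support_sum_subset)
  also have "\<dots> \<subseteq> (\<Union>R\<in>?F. support (Y R))" by (rule UN_mono) auto
  finally have supp: "support y \<subseteq> (\<Union>R\<in>?F. support (Y R))" .
  have "finite (\<Union>R\<in>?F. support (Y R))" "(\<Union>R\<in>?F. support (Y R)) \<subseteq> \<C>"
    using Y F(1) by blast+
  then have "finite (support y)" "support y \<subseteq> \<C>" using finite_subset[OF supp] supp by auto
  with rel show ?thesis by blast
qed

section \<open>Triangularity of the morphism counts\<close>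

lemma Mor_onto_subrack:
  "E \<subseteq> fst C \<Longrightarrow> Mor_onto D (E, snd C) = {f \<in> Mor D C. f ` fst D = E}"
  unfolding Mor_onto_def Mor_subrack by auto

lemma card_Mor_eq_sum_Mor_onto:
  assumes D: "finite (fst D)" and C: "finite (fst C)"
  shows "card (Mor D C) = (\<Sum>E\<in>Pow (fst C). card (Mor_onto D (E, snd C)))"
proof -
  have "Mor D C = (\<Union>E\<in>Pow (fst C). Mor_onto D (E, snd C))"
  proof (intro equalityI subsetI)
    fix f assume f: "f \<in> Mor D C"
    then have "f ` fst D \<in> Pow (fst C)" unfolding Mor_def by auto
    then show "f \<in> (\<Union>E\<in>Pow (fst C). Mor_onto D (E, snd C))"
      using f Mor_onto_subrack[of "f ` fst D" C D] by blast
  next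
    fix f assume "f \<in> (\<Union>E\<in>Pow (fst C). Mor_onto D (E, snd C))"
    then show "f \<in> Mor D C" using Mor_onto_subrack by blast
  qed
  moreover have "finite (Mor_onto D (E, snd C))" if "E \<in> Pow (fst C)" for E
    using Mor_finite[OF D] C that finite_subset[OF Mor_onto_subset] by (simp add: finite_subset)
  moreover have "Mor_onto D (E, snd C) \<inter> Mor_onto D (E', snd C) = {}"
    if "E \<in> Pow (fst C)" "E' \<in> Pow (fst C)" "E \<noteq> E'" for E E'
    using that unfolding Mor_onto_def by auto
  ultimately show ?thesis using C by (simp add: card_UN_disjoint)
qed

lemma hom_image_subrack:
  assumes D: "is_rack D" and f: "rack_hom D C f"
  shows "subrack C (f ` fst D)"
proof -
  have "snd C (f a) ` f ` fst D = f ` fst D" if a: "a \<in> fst D" for a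
  proof -
    have "snd C (f a) ` f ` fst D = f ` snd D a ` fst D"
      using f a unfolding rack_hom_def by (auto simp: image_iff)
    also have "\<dots> = f ` fst D" using rack_bij[OF D a] by (simp add: bij_betw_def)
    finally show ?thesis .
  qed
  then show ?thesis using f unfolding subrack_def rack_hom_def by blast
qed

lemma hom_onto_connected:
  assumes D: "is_rack D" "connected_rack D" and X: "is_rack X"
    and f: "rack_hom D X f" "f ` fst D = fst X"
  shows "connected_rack X"
  unfolding connected_rack_def
proof (intro conjI ballI)
  show "fst X \<noteq> {}" using D(2) f(2) unfolding connected_rack_def by blast
  fix u v assume "u \<in> fst X" "v \<in> fst X"
  then obtain c c' where c: "c \<in> fst D" "u = f c" and c': "c' \<in> fst D" "v = f c'"
    using f(2) by blast
  have "fst D \<subseteq> {d. f d \<in> orbit X u}"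
    using connected_left_invariant[OF D left_invariant_vimage[OF f(1) orbit_left_invariant[OF X]] c(1)]
      self_in_orbit c(2) by blast
  then have "v \<in> orbit X u" using c' by blast
  then show "\<exists>g\<in>Inn X. g u = v" unfolding orbit_def by blast
qed

definition connected_subracks :: "rack \<Rightarrow> nat set set" where
  "connected_subracks C = {E. E \<subseteq> fst C \<and> finite_rack (E, snd C) \<and> connected_rack (E, snd C)}"

lemma Mor_onto_connected_subracks:
  assumes D: "finite_rack D" "connected_rack D" and C: "finite_rack C" and E: "E \<subseteq> fst C"
    and f: "f \<in> Mor_onto D (E, snd C)"
  shows "E \<in> connected_subracks C"
proof -
  have D': "is_rack D" using D unfolding finite_rack_def by blast
  have onto: "f ` fst D = E" and hom: "rack_hom D (E, snd C) f"
    using f unfolding Mor_onto_def Mor_def by auto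
  then have "rack_hom D C f" using E unfolding rack_hom_def by auto
  then have "subrack C E" using hom_image_subrack[OF D'] onto by blast
  then have E_rack: "finite_rack (E, snd C)" by (rule finite_rack_subrack[OF C])
  then have "connected_rack (E, snd C)"
    using hom_onto_connected[OF D' D(2) _ hom] onto unfolding finite_rack_def by simp
  then show ?thesis using E E_rack unfolding connected_subracks_def by blast
qed

lemma card_Mor_onto_self_pos: "finite_rack D \<Longrightarrow> 0 < card (Mor_onto D D)"
proof -
  assume D: "finite_rack D"
  have "restrict id (fst D) \<in> Mor_onto D D"
    using rack_closed D unfolding finite_rack_def Mor_onto_def Mor_def rack_hom_def by auto
  moreover have "finite (Mor_onto D D)"
    using D Mor_finite finite_subset[OF Mor_onto_subset] unfolding finite_rack_def by blast
  ultimately show ?thesis using card_gt_0_iff by blast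
qed

lemma Mor_onto_card_le:
  assumes D: "finite (fst D)" and f: "f \<in> Mor_onto D X"
  shows "card (fst X) \<le> card (fst D)"
    and "card (fst X) = card (fst D) \<Longrightarrow> rack_iso D X"
proof -
  have onto: "f ` fst D = fst X" and hom: "rack_hom D X f"
    using f unfolding Mor_onto_def Mor_def by auto
  show "card (fst X) \<le> card (fst D)" using card_image_le[OF D, of f] onto by simp
  assume "card (fst X) = card (fst D)"
  then have "bij_betw f (fst D) (fst X)"
    using eq_card_imp_inj_on[OF D] onto unfolding bij_betw_def by metis
  then show "rack_iso D X" using hom unfolding rack_iso_def by blast
qed

definition subrack_count :: "rack \<Rightarrow> rack \<Rightarrow> nat" where
  "subrack_count E' C = card {E \<in> connected_subracks C. rack_iso (E, snd C) E'}"

lemma subrack_count_card_le: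
  assumes C: "finite_rack C" and count: "subrack_count E' C \<noteq> 0"
  shows "card (fst E') \<le> card (fst C)"
    and "card (fst E') = card (fst C) \<Longrightarrow> rack_iso C E'"
proof -
  have "{E \<in> connected_subracks C. rack_iso (E, snd C) E'} \<noteq> {}"
    using count unfolding subrack_count_def by (metis card.empty)
  then obtain E where E: "E \<subseteq> fst C" "rack_iso (E, snd C) E'"
    unfolding connected_subracks_def by blast
  then obtain h where "bij_betw h E (fst E')" unfolding rack_iso_def by auto
  then have card: "card (fst E') = card E" by (simp add: bij_betw_same_card)
  have finC: "finite (fst C)" using C unfolding finite_rack_def by blast
  show "card (fst E') \<le> card (fst C)" using card card_mono[OF finC E(1)] by simp
  assume "card (fst E') = card (fst C)"
  then have "E = fst C" using card_subset_eq[OF finC E(1)] card by simp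
  then show "rack_iso C E'" using E(2) by simp
qed

lemma subrack_count_self:
  assumes "finite_rack C" "connected_rack C"
  shows "subrack_count C C = 1"
proof -
  have "{E \<in> connected_subracks C. rack_iso (E, snd C) C} = {fst C}"
  proof
    show "{fst C} \<subseteq> {E \<in> connected_subracks C. rack_iso (E, snd C) C}"
      using assms rack_iso_refl[of C] unfolding connected_subracks_def by simp
    show "{E \<in> connected_subracks C. rack_iso (E, snd C) C} \<subseteq> {fst C}"
    proof
      fix E assume E: "E \<in> {E \<in> connected_subracks C. rack_iso (E, snd C) C}"
      then obtain h where "bij_betw h E (fst C)" unfolding rack_iso_def by auto
      then have "card E = card (fst C)" by (rule bij_betw_same_card)
      moreover have "E \<subseteq> fst C" "finite (fst C)"
        using E assms(1) unfolding connected_subracks_def finite_rack_def by auto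
      ultimately show "E \<in> {fst C}" using card_subset_eq by blast
    qed
  qed
  then show ?thesis unfolding subrack_count_def by simp
qed

lemma card_Mor_eq_sum_reps:
  assumes rep: "rep_set \<C>" and D: "finite_rack D" "connected_rack D" and C: "finite_rack C"
    and K: "finite K" "K \<subseteq> \<C>" "\<And>E. E \<in> connected_subracks C \<Longrightarrow> rep \<C> (E, snd C) \<in> K"
  shows "card (Mor D C) = (\<Sum>E'\<in>K. card (Mor_onto D E') * subrack_count E' C)"
proof -
  let ?P = "connected_subracks C" and ?n = "\<lambda>E. card (Mor_onto D (E, snd C))"
  have finD: "finite (fst D)" and finC: "finite (fst C)" using D C unfolding finite_rack_def by auto
  have P: "?P \<subseteq> Pow (fst C)" unfolding connected_subracks_def by blast
  then have finP: "finite ?P" using finC finite_subset by blast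
  have "card (Mor D C) = (\<Sum>E\<in>Pow (fst C). ?n E)" by (rule card_Mor_eq_sum_Mor_onto[OF finD finC])
  also have "\<dots> = (\<Sum>E\<in>?P. ?n E)"
  proof (rule sum.mono_neutral_right[OF _ P])
    show "\<forall>E\<in>Pow (fst C) - ?P. ?n E = 0"
      using Mor_onto_connected_subracks[OF D C] by (metis DiffE PowD card.empty equals0I)
  qed (use finC in simp)
  also have "\<dots> = (\<Sum>E'\<in>K. \<Sum>E\<in>{E \<in> ?P. rep \<C> (E, snd C) = E'}. ?n E)"
    using K(3) by (intro sum.group[symmetric, OF finP K(1)]) blast
  also have "\<dots> = (\<Sum>E'\<in>K. card (Mor_onto D E') * subrack_count E' C)"
  proof (rule sum.cong[OF refl])
    fix E' assume "E' \<in> K"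
    then have E': "E' \<in> \<C>" "finite_rack E'" using K(2) rep unfolding rep_set_def by auto
    have P_rack: "finite_rack (E, snd C)" "connected_rack (E, snd C)" if "E \<in> ?P" for E
      using that unfolding connected_subracks_def by auto
    have "{E \<in> ?P. rep \<C> (E, snd C) = E'} = {E \<in> ?P. rack_iso (E, snd C) E'}"
      using rep_eq_iff[OF rep P_rack E'(1)] by blast
    moreover have "?n E = card (Mor_onto D E')" if "E \<in> ?P" "rack_iso (E, snd C) E'" for E
      using card_Mor_iso(2)[OF D(1) P_rack(1)[OF that(1)] E'(2) that(2)] .
    ultimately show "(\<Sum>E\<in>{E \<in> ?P. rep \<C> (E, snd C) = E'}. ?n E) = card (Mor_onto D E') * subrack_count E' C"
      unfolding subrack_count_def by (simp add: mult.commute)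
  qed
  finally show ?thesis .
qed

lemma triangular_kernel_trivial:
  fixes A :: "'a \<Rightarrow> 'a \<Rightarrow> 'b::idom" and w :: "'a \<Rightarrow> 'c::order"
  assumes K: "finite K"
    and lower: "\<And>a b. a \<in> K \<Longrightarrow> b \<in> K \<Longrightarrow> A a b \<noteq> 0 \<Longrightarrow> b \<noteq> a \<Longrightarrow> w b < w a"
    and diag: "\<And>a. a \<in> K \<Longrightarrow> A a a \<noteq> 0"
    and kernel: "\<And>a. a \<in> K \<Longrightarrow> (\<Sum>b\<in>K. A a b * x b) = 0"
  shows "\<forall>a\<in>K. x a = 0"
proof (rule ccontr)
  let ?Z = "{b \<in> K. x b \<noteq> 0}"
  assume "\<not> (\<forall>a\<in>K. x a = 0)"
  then have Z: "finite ?Z" "?Z \<noteq> {}" using K by auto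
  define a where "a = arg_min_on w ?Z"
  have a: "a \<in> K" "x a \<noteq> 0" using arg_min_if_finite(1)[OF Z] unfolding a_def by auto
  have off_diag: "\<forall>b\<in>K - {a}. A a b * x b = 0"
    using lower[OF a(1)] arg_min_if_finite(2)[OF Z, of w] unfolding a_def by fastforce
  have "(\<Sum>b\<in>K. A a b * x b) = A a a * x a + (\<Sum>b\<in>K - {a}. A a b * x b)"
    using sum.remove[OF K a(1)] .
  then have "(\<Sum>b\<in>K. A a b * x b) = A a a * x a"
    using sum.neutral[OF off_diag] by simp
  then show False using kernel[OF a(1)] diag[OF a(1)] a(2) by simp
qed

definition subrack_reps :: "rack set \<Rightarrow> rack set \<Rightarrow> rack set" where
  "subrack_reps \<C> N = (\<Union>C\<in>N. (\<lambda>E. rep \<C> (E, snd C)) ` connected_subracks C)"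

lemma finite_subrack_reps:
  assumes "finite N" "N \<subseteq> \<C>" "rep_set \<C>"
  shows "finite (subrack_reps \<C> N)"
proof -
  have "finite (connected_subracks C)" if "C \<in> N" for C
    using assms(2,3) that unfolding rep_set_def connected_subracks_def finite_rack_def by auto
  then show ?thesis using assms(1) unfolding subrack_reps_def by blast
qed

lemma subrack_reps_subset: "rep_set \<C> \<Longrightarrow> subrack_reps \<C> N \<subseteq> \<C>"
  using rep_in_iso(1) unfolding subrack_reps_def connected_subracks_def by blast

lemma subset_subrack_reps:
  assumes rep: "rep_set \<C>" and N: "N \<subseteq> \<C>"
  shows "N \<subseteq> subrack_reps \<C> N"
proof
  fix C assume C: "C \<in> N"
  then have "finite_rack C" "connected_rack C" using rep N unfolding rep_set_def by auto
  then have "fst C \<in> connected_subracks C" unfolding connected_subracks_def by simp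
  moreover have "rep \<C> (fst C, snd C) = C" using rep_self[OF rep, of C] N C by auto
  ultimately show "C \<in> subrack_reps \<C> N" using C unfolding subrack_reps_def by force
qed

lemma Phi_eq_sum_Mor_onto:
  assumes rep: "rep_set \<C>" and D: "finite_rack D" "connected_rack D"
    and y: "finite (support y)" "support y \<subseteq> \<C>"
  defines "K \<equiv> subrack_reps \<C> (support y)"
  shows "Phi D y = (\<Sum>E'\<in>K. int (card (Mor_onto D E')) * (\<Sum>C\<in>K. int (subrack_count E' C) * y C))"
proof -
  have K: "finite K" "K \<subseteq> \<C>" "support y \<subseteq> K"
    using finite_subrack_reps[OF y rep] subrack_reps_subset[OF rep] subset_subrack_reps[OF rep y(2)]
    unfolding K_def by auto
  have "Phi D y = (\<Sum>C\<in>K. y C * int (card (Mor D C)))" by (rule Phi_eq_sum[OF K(1,3)])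
  also have "\<dots> = (\<Sum>C\<in>K. y C * (\<Sum>E'\<in>K. int (card (Mor_onto D E')) * int (subrack_count E' C)))"
  proof (rule sum.cong[OF refl])
    fix C assume "C \<in> K"
    show "y C * int (card (Mor D C)) = y C * (\<Sum>E'\<in>K. int (card (Mor_onto D E')) * int (subrack_count E' C))"
    proof (cases "C \<in> support y")
      case True
      then have "finite_rack C" using rep y(2) unfolding rep_set_def by blast
      then have "card (Mor D C) = (\<Sum>E'\<in>K. card (Mor_onto D E') * subrack_count E' C)"
        using card_Mor_eq_sum_reps[OF rep D _ K(1,2)] True unfolding K_def subrack_reps_def by blast
      then show ?thesis by simp
    qed simp
  qed
  also have "\<dots> = (\<Sum>C\<in>K. \<Sum>E'\<in>K. int (card (Mor_onto D E')) * (int (subrack_count E' C) * y C))"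
    by (simp add: sum_distrib_left algebra_simps)
  also have "\<dots> = (\<Sum>E'\<in>K. int (card (Mor_onto D E')) * (\<Sum>C\<in>K. int (subrack_count E' C) * y C))"
    by (subst sum.swap) (simp add: sum_distrib_left)
  finally show ?thesis .
qed

lemma Mor_onto_reps_card_less:
  assumes rep: "rep_set \<C>" and "D \<in> \<C>" "E' \<in> \<C>" "Mor_onto D E' \<noteq> {}" "E' \<noteq> D"
  shows "card (fst E') < card (fst D)"
proof -
  have "finite (fst D)" using rep assms(2) unfolding rep_set_def finite_rack_def by blast
  then show ?thesis
    using Mor_onto_card_le rep_set_iso_eq[OF rep assms(2,3)] assms(4,5) by (metis equals0I le_neq_implies_less)
qed

lemma subrack_count_reps_card_less:
  assumes rep: "rep_set \<C>" and "C \<in> \<C>" "E' \<in> \<C>" "subrack_count E' C \<noteq> 0" "C \<noteq> E'"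
  shows "card (fst E') < card (fst C)"
proof -
  have "finite_rack C" using rep assms(2) unfolding rep_set_def by blast
  then show ?thesis
    using subrack_count_card_le rep_set_iso_eq[OF rep assms(2,3)] assms(4,5) by (metis le_neq_implies_less)
qed

lemma zero_if_Phi_zero_on_reps:
  assumes rep: "rep_set \<C>" and y: "finite (support y)" "support y \<subseteq> \<C>"
    and Phi: "\<And>D. D \<in> \<C> \<Longrightarrow> Phi D y = 0"
  shows "y = (\<lambda>_. 0)"
proof -
  define K where "K = subrack_reps \<C> (support y)"
  define m where "m E' = (\<Sum>C\<in>K. int (subrack_count E' C) * y C)" for E'
  have K: "finite K" "K \<subseteq> \<C>" "support y \<subseteq> K"
    using finite_subrack_reps[OF y rep] subrack_reps_subset[OF rep] subset_subrack_reps[OF rep y(2)]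
    unfolding K_def by auto
  have reps: "finite_rack C" "connected_rack C" if "C \<in> K" for C
    using rep K(2) that unfolding rep_set_def by auto
  have m_zero: "\<forall>E'\<in>K. m E' = 0"
  proof (rule triangular_kernel_trivial[OF K(1), where w = "\<lambda>E. card (fst E)"])
    show "card (fst E') < card (fst D)"
      if "D \<in> K" "E' \<in> K" "int (card (Mor_onto D E')) \<noteq> 0" "E' \<noteq> D" for D E'
      using Mor_onto_reps_card_less[OF rep] K(2) that by fastforce
    show "int (card (Mor_onto D D)) \<noteq> 0" if "D \<in> K" for D
      using card_Mor_onto_self_pos[OF reps(1)[OF that]] by simp
    show "(\<Sum>E'\<in>K. int (card (Mor_onto D E')) * m E') = 0" if "D \<in> K" for D
    proof -
      have "D \<in> \<C>" using K(2) that by blast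
      then show ?thesis
        using Phi_eq_sum_Mor_onto[OF rep reps[OF that] y] Phi unfolding K_def m_def by simp
    qed
  qed
  have "\<forall>C\<in>K. y C = 0"
  proof (rule triangular_kernel_trivial[OF K(1), where w = "\<lambda>E. - int (card (fst E))"])
    show "- int (card (fst C)) < - int (card (fst E'))"
      if "E' \<in> K" "C \<in> K" "int (subrack_count E' C) \<noteq> 0" "C \<noteq> E'" for E' C
      using subrack_count_reps_card_less[OF rep] K(2) that by fastforce
    show "int (subrack_count C C) \<noteq> 0" if "C \<in> K" for C
      using subrack_count_self[OF reps[OF that]] by simp
    show "(\<Sum>C\<in>K. int (subrack_count E' C) * y C) = 0" if "E' \<in> K" for E'
      using m_zero that unfolding m_def by simp
  qed
  then show ?thesis using K(3) by fastforce
qed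

theorem theorem5p8:
  fixes \<C> :: "rack set" and x :: "rack \<Rightarrow> int"
  assumes "rep_set \<C>"
    and "free_elem x"
    and "\<forall>C\<in>\<C>. Phi C x = 0"
  shows "x \<in> burnside_rel"
proof -
  obtain y where y: "finite (support y)" "support y \<subseteq> \<C>" "(\<lambda>X. x X - y X) \<in> burnside_rel"
    using congruent_reps_combination[OF assms(1,2)] by blast
  have "Phi D y = 0" if D: "D \<in> \<C>" for D
  proof -
    have "finite_rack D" "connected_rack D" using assms(1) D unfolding rep_set_def by auto
    then have "Phi D (\<lambda>X. x X - y X) = 0" using Phi_burnside_rel y(3) by blast
    moreover have "finite (support x)" using assms(2) unfolding free_elem_def by blast
    ultimately show ?thesis using Phi_diff[of x y D] y(1) assms(3) D by simp
  qed
  then have "y = (\<lambda>_. 0)" by (rule zero_if_Phi_zero_on_reps[OF assms(1) y(1,2)])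
  then show ?thesis using y(3) by simp
qed

end
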